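(* Let $N(T)$ be a $C^0$ net on a grid $T$ with lines $s_i$, $t_j$, having the BMSDD property with constant $L$, and let $(\boldsymbol{\alpha}^{[s]},\boldsymbol{\beta}^{[s]}),(\boldsymbol{\alpha}^{[t]},\boldsymbol{\beta}^{[t]})\in\mathscr{W}$. Let $\tilde T$ be the grid with lines $\tilde s_{2i}=(1-\alpha^{[s]}_i)s_i+\alpha^{[s]}_is_{i+1}$, $\tilde s_{2i+1}=(1-\beta^{[s]}_i)s_i+\beta^{[s]}_is_{i+1}$, $\tilde t_{2j}=(1-\alpha^{[t]}_j)t_j+\alpha^{[t]}_jt_{j+1}$, $\tilde t_{2j+1}=(1-\beta^{[t]}_j)t_j+\beta^{[t]}_jt_{j+1}$ ($i,j\in\mathbb{Z}$). Then the net $\mathcal{C}(N)|_{\tilde T}$ has the BMSDD property with constant $3L$.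
   Context: $\mathscr{W}$ is the set of pairs $(\boldsymbol{\alpha},\boldsymbol{\beta})$ of real bi-infinite sequences with $\inf_i\min\{\alpha_i,1-\beta_i,\beta_i-\alpha_i\}>0$. For strictly increasing bi-infinite real sequences $(s_i)$, $(t_j)$, unbounded above and below, the grid is $T=\bigcup_i\{s_i\}\times\mathbb{R}\cup\bigcup_j\mathbb{R}\times\{t_j\}$. A net $N(T)$ is a function on $T$ with values in $\mathbb{R}^m$; it is $C^0$ if all u-functions $s\mapsto N(s,t_j)$, $t\mapsto N(s_i,t)$ are continuous. The piecewise Coons patch is defined on each rectangle $[s_i,s_{i+1}]\times[t_j,t_{j+1}]$, with $h_1=s_{i+1}-s_i$, $h_2=t_{j+1}-t_j$, by $\mathcal{C}(N)(s,t)=\frac{s_{i+1}-s}{h_1}N(s_i,t)+\frac{s-s_i}{h_1}N(s_{i+1},t)+\frac{t_{j+1}-t}{h_2}N(s,t_j)+\frac{t-t_j}{h_2}N(s,t_{j+1})-B(s,t)$, with $B(s,t)=\frac{s_{i+1}-s}{h_1}\big(\frac{t_{j+1}-t}{h_2}N(s_i,t_j)+\frac{t-t_j}{h_2}N(s_i,t_{j+1})\big)+\frac{s-s_i}{h_1}\big(\frac{t_{j+1}-t}{h_2}N(s_{i+1},t_j)+\frac{t-t_j}{h_2}N(s_{i+1},t_{j+1})\big)$. For $\sigma_1\ne\sigma_2$, $\tau_1\ne\tau_2$, $[\sigma_1,\sigma_2;\tau_1,\tau_2]N=\frac{N(\sigma_1,\tau_1)+N(\sigma_2,\tau_2)-N(\sigma_2,\tau_1)-N(\sigma_1,\tau_2)}{(\sigma_1-\sigma_2)(\tau_1-\tau_2)}$;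 a net on a grid has the BMSDD property with constant $L$ if $\|[\sigma_1,\sigma_2;\tau_1,\tau_2]N\|_\infty\le L$ whenever $\sigma_1\ne\sigma_2$, $\tau_1\ne\tau_2$ and all four points $(\sigma_i,\tau_j)$ lie on the grid. *)

theory Defs
  imports "HOL-Analysis.Analysis"
begin

definition grid_lines :: "(int \<Rightarrow> real) \<Rightarrow> bool" where
  "grid_lines s \<longleftrightarrow> strict_mono s \<and> (\<forall>M. \<exists>i. s i > M) \<and> (\<forall>M. \<exists>i. s i < M)"

definition grid :: "(int \<Rightarrow> real) \<Rightarrow> (int \<Rightarrow> real) \<Rightarrow> (real \<times> real) set" where
  "grid s t = {(x, y). (\<exists>i. x = s i) \<or> (\<exists>j. y = t j)}"

definition W_class :: "(int \<Rightarrow> real) \<Rightarrow> (int \<Rightarrow> real) \<Rightarrow> bool" where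
  "W_class \<alpha> \<beta> \<longleftrightarrow> (INF i. min (\<alpha> i) (min (1 - \<beta> i) (\<beta> i - \<alpha> i))) > 0
      \<and> bdd_below (range (\<lambda>i. min (\<alpha> i) (min (1 - \<beta> i) (\<beta> i - \<alpha> i))))"

definition C0_net :: "(int \<Rightarrow> real) \<Rightarrow> (int \<Rightarrow> real) \<Rightarrow> (real \<Rightarrow> real \<Rightarrow> real^'m) \<Rightarrow> bool" where
  "C0_net s t N \<longleftrightarrow> (\<forall>j. continuous_on UNIV (\<lambda>x. N x (t j))) \<and> (\<forall>i. continuous_on UNIV (\<lambda>y. N (s i) y))"

definition mixed_dd :: "(real \<Rightarrow> real \<Rightarrow> real^'m) \<Rightarrow> real \<Rightarrow> real \<Rightarrow> real \<Rightarrow> real \<Rightarrow> real^'m" where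
  "mixed_dd N \<sigma>1 \<sigma>2 \<tau>1 \<tau>2 =
     (1 / ((\<sigma>1 - \<sigma>2) * (\<tau>1 - \<tau>2))) *\<^sub>R (N \<sigma>1 \<tau>1 + N \<sigma>2 \<tau>2 - N \<sigma>2 \<tau>1 - N \<sigma>1 \<tau>2)"

definition BMSDD :: "(real \<times> real) set \<Rightarrow> (real \<Rightarrow> real \<Rightarrow> real^'m) \<Rightarrow> real \<Rightarrow> bool" where
  "BMSDD G N L \<longleftrightarrow> (\<forall>\<sigma>1 \<sigma>2 \<tau>1 \<tau>2. \<sigma>1 \<noteq> \<sigma>2 \<longrightarrow> \<tau>1 \<noteq> \<tau>2 \<longrightarrow>
      (\<sigma>1, \<tau>1) \<in> G \<longrightarrow> (\<sigma>1, \<tau>2) \<in> G \<longrightarrow> (\<sigma>2, \<tau>1) \<in> G \<longrightarrow> (\<sigma>2, \<tau>2) \<in> G \<longrightarrow>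
      infnorm (mixed_dd N \<sigma>1 \<sigma>2 \<tau>1 \<tau>2) \<le> L)"

definition cell :: "(int \<Rightarrow> real) \<Rightarrow> real \<Rightarrow> int" where
  "cell s x = (THE i. s i \<le> x \<and> x < s (i + 1))"

definition coons :: "(int \<Rightarrow> real) \<Rightarrow> (int \<Rightarrow> real) \<Rightarrow> (real \<Rightarrow> real \<Rightarrow> real^'m) \<Rightarrow> real \<Rightarrow> real \<Rightarrow> real^'m" where
  "coons s t N x y =
    (let i = cell s x; j = cell t y;
         h1 = s (i + 1) - s i; h2 = t (j + 1) - t j;
         a0 = (s (i + 1) - x) / h1; a1 = (x - s i) / h1;
         b0 = (t (j + 1) - y) / h2; b1 = (y - t j) / h2;
         B = a0 *\<^sub>R (b0 *\<^sub>R N (s i) (t j) + b1 *\<^sub>R N (s i) (t (j + 1)))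
           + a1 *\<^sub>R (b0 *\<^sub>R N (s (i + 1)) (t j) + b1 *\<^sub>R N (s (i + 1)) (t (j + 1)))
     in a0 *\<^sub>R N (s i) y + a1 *\<^sub>R N (s (i + 1)) y
        + b0 *\<^sub>R N x (t j) + b1 *\<^sub>R N x (t (j + 1)) - B)"

definition refine :: "(int \<Rightarrow> real) \<Rightarrow> (int \<Rightarrow> real) \<Rightarrow> (int \<Rightarrow> real) \<Rightarrow> int \<Rightarrow> real" where
  "refine \<alpha> \<beta> s k =
    (let i = k div 2 in
      if even k then (1 - \<alpha> i) * s i + \<alpha> i * s (i + 1)
      else (1 - \<beta> i) * s i + \<beta> i * s (i + 1))"

end

theory Submission
  imports Defs
begin

text \<open>On a single cell [s_i, s_{i+1}] \<times> [t_j, t_{j+1}] the Coons patch is a blend of the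
  boundary curves, and its mixed difference over a rectangle [x_1, x_2] \<times> [y_1, y_2] inside the
  cell is an explicit combination of three mixed differences of the net whose four points lie on
  the grid; each contributes at most L |x_1 - x_2| |y_1 - y_2|.  Mixed differences are additive
  under subdivision of the rectangle, so the bound 3L passes from single cells to arbitrary
  rectangles.  Hence the Coons patch has the BMSDD property with constant 3L on the whole plane,
  and in particular on the refined grid.\<close>

definition mixed_diff :: "(real \<Rightarrow> real \<Rightarrow> 'a::ab_group_add) \<Rightarrow> real \<Rightarrow> real \<Rightarrow> real \<Rightarrow> real \<Rightarrow> 'a"
  where "mixed_diff F a b c d = F a c + F b d - F b c - F a d"

lemma mixed_dd_eq_mixed_diff:
  "mixed_dd N a b c d = (1 / ((a - b) * (c - d))) *\<^sub>R mixed_diff N a b c d"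
  by (simp add: mixed_dd_def mixed_diff_def)

lemma BMSDD_imp_infnorm_mixed_diff_le:
  assumes "BMSDD G N L" and "(a, c) \<in> G" "(a, d) \<in> G" "(b, c) \<in> G" "(b, d) \<in> G"
  shows "infnorm (mixed_diff N a b c d) \<le> L * \<bar>a - b\<bar> * \<bar>c - d\<bar>"
proof (cases "a = b \<or> c = d")
  case True
  then show ?thesis by (auto simp: mixed_diff_def infnorm_0)
next
  case False
  then have "infnorm (mixed_dd N a b c d) \<le> L"
    using assms unfolding BMSDD_def by blast
  with False show ?thesis
    by (simp add: mixed_dd_eq_mixed_diff infnorm_mul abs_mult divide_le_eq mult.assoc)
qed

lemma BMSDD_if_infnorm_mixed_diff_le:
  assumes "\<And>a b c d. infnorm (mixed_diff N a b c d) \<le> L * \<bar>a - b\<bar> * \<bar>c - d\<bar>"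
  shows "BMSDD G N L"
  unfolding BMSDD_def
proof (intro allI impI)
  fix a b c d :: real
  assume "a \<noteq> b" "c \<noteq> d"
  then show "infnorm (mixed_dd N a b c d) \<le> L"
    using assms[of a b c d]
    by (simp add: mixed_dd_eq_mixed_diff infnorm_mul abs_mult divide_le_eq mult.assoc)
qed

lemma grid_lines_less: "grid_lines s \<Longrightarrow> i < k \<Longrightarrow> s i < s k"
  unfolding grid_lines_def strict_mono_def by blast

lemma grid_lines_le: "grid_lines s \<Longrightarrow> i \<le> k \<Longrightarrow> s i \<le> s k"
  using grid_lines_less[of s i k] by (cases "i = k") auto

lemma cell_eqI:
  assumes "grid_lines s" and "s i \<le> x" "x < s (i + 1)"
  shows "cell s x = i"
  unfolding cell_def
proof (rule the_equality)
  fix k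
  assume k: "s k \<le> x \<and> x < s (k + 1)"
  have "\<not> k + 1 \<le> i" "\<not> i + 1 \<le> k"
    using grid_lines_le[OF \<open>grid_lines s\<close>, of "k + 1" i]
      grid_lines_le[OF \<open>grid_lines s\<close>, of "i + 1" k] k assms(2,3)
    by linarith+
  then show "k = i" by linarith
qed (use assms in auto)

lemma cell_grid_line: "grid_lines s \<Longrightarrow> cell s (s k) = k"
  by (rule cell_eqI) (auto intro: grid_lines_less)

definition coons_patch ::
    "(int \<Rightarrow> real) \<Rightarrow> (int \<Rightarrow> real) \<Rightarrow> (real \<Rightarrow> real \<Rightarrow> 'a::real_vector) \<Rightarrow> int \<Rightarrow> int \<Rightarrow>
     real \<Rightarrow> real \<Rightarrow> 'a"
  where "coons_patch s t N i j x y =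
    (let h1 = s (i + 1) - s i; h2 = t (j + 1) - t j;
         a0 = (s (i + 1) - x) / h1; a1 = (x - s i) / h1;
         b0 = (t (j + 1) - y) / h2; b1 = (y - t j) / h2;
         B = a0 *\<^sub>R (b0 *\<^sub>R N (s i) (t j) + b1 *\<^sub>R N (s i) (t (j + 1)))
           + a1 *\<^sub>R (b0 *\<^sub>R N (s (i + 1)) (t j) + b1 *\<^sub>R N (s (i + 1)) (t (j + 1)))
     in a0 *\<^sub>R N (s i) y + a1 *\<^sub>R N (s (i + 1)) y
        + b0 *\<^sub>R N x (t j) + b1 *\<^sub>R N x (t (j + 1)) - B)"

lemma coons_eq_coons_patch_cell: "coons s t N x y = coons_patch s t N (cell s x) (cell t y) x y"
  by (simp add: coons_def coons_patch_def Let_def)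

lemma coons_patch_boundary:
  assumes "s (i + 1) \<noteq> s i" and "t (j + 1) \<noteq> t j"
  shows "coons_patch s t N i j (s i) y = N (s i) y"
    and "coons_patch s t N i j (s (i + 1)) y = N (s (i + 1)) y"
    and "coons_patch s t N i j x (t j) = N x (t j)"
    and "coons_patch s t N i j x (t (j + 1)) = N x (t (j + 1))"
  using assms by (simp_all add: coons_patch_def Let_def)

text \<open>On the upper and right edges of a cell, cell selects the neighbouring cell; the two
  patches agree there because both interpolate the net.\<close>

lemma coons_eq_coons_patch:
  assumes gs: "grid_lines s" and gt: "grid_lines t"
    and x: "s i \<le> x" "x \<le> s (i + 1)" and y: "t j \<le> y" "y \<le> t (j + 1)"
  shows "coons s t N x y = coons_patch s t N i j x y"
proof -
  have hs: "s (k + 1) \<noteq> s k" and ht: "t (k + 1) \<noteq> t k" for k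
    using grid_lines_less[OF gs, of k "k + 1"] grid_lines_less[OF gt, of k "k + 1"] by auto
  note boundary = coons_patch_boundary[where s = s and t = t and N = N, OF hs ht]
  consider "x < s (i + 1)" "y < t (j + 1)" | "x = s (i + 1)" | "y = t (j + 1)"
    using x y by linarith
  then show ?thesis
  proof cases
    case 1
    then show ?thesis using cell_eqI[OF gs x(1)] cell_eqI[OF gt y(1)]
      by (simp add: coons_eq_coons_patch_cell)
  next
    case 2
    then show ?thesis
      using boundary(1)[where i = "i + 1"] boundary(2)[where i = i and j = j]
      by (simp add: coons_eq_coons_patch_cell cell_grid_line[OF gs])
  next
    case 3
    then show ?thesis
      using boundary(3)[where j = "j + 1"] boundary(4)[where i = i and j = j]
      by (simp add: coons_eq_coons_patch_cell cell_grid_line[OF gt])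
  qed
qed

lemma mixed_diff_coons_patch:
  fixes N :: "real \<Rightarrow> real \<Rightarrow> 'a::real_vector" and x1 x2 y1 y2 :: real
  assumes "s (i + 1) \<noteq> s i" and "t (j + 1) \<noteq> t j"
  defines "c \<equiv> (x2 - x1) / (s (i + 1) - s i)" and "d \<equiv> (y2 - y1) / (t (j + 1) - t j)"
  shows "mixed_diff (coons_patch s t N i j) x1 x2 y1 y2 =
     c *\<^sub>R mixed_diff N (s i) (s (i + 1)) y1 y2 + d *\<^sub>R mixed_diff N x1 x2 (t j) (t (j + 1))
     - (c * d) *\<^sub>R mixed_diff N (s i) (s (i + 1)) (t j) (t (j + 1))"
proof -
  define h1 h2 where "h1 = s (i + 1) - s i" and "h2 = t (j + 1) - t j"
  have "h1 \<noteq> 0" "h2 \<noteq> 0" using assms by (auto simp: h1_def h2_def)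
  have x1: "(s (i + 1) - x1) / h1 = (s (i + 1) - x2) / h1 + c"
    "(x1 - s i) / h1 = (x2 - s i) / h1 - c"
    using \<open>h1 \<noteq> 0\<close> by (simp_all add: c_def h1_def diff_divide_distrib)
  have y1: "(t (j + 1) - y1) / h2 = (t (j + 1) - y2) / h2 + d"
    "(y1 - t j) / h2 = (y2 - t j) / h2 - d"
    using \<open>h2 \<noteq> 0\<close> by (simp_all add: d_def h2_def diff_divide_distrib)
  show ?thesis
    unfolding mixed_diff_def coons_patch_def Let_def h1_def[symmetric] h2_def[symmetric] x1 y1
    by (simp add: algebra_simps)
qed

lemma infnorm_mixed_diff_coons_cell:
  assumes gs: "grid_lines s" and gt: "grid_lines t" and N: "BMSDD (grid s t) N L"
    and x: "s i \<le> x1" "x1 \<le> s (i + 1)" "s i \<le> x2" "x2 \<le> s (i + 1)"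
    and y: "t j \<le> y1" "y1 \<le> t (j + 1)" "t j \<le> y2" "y2 \<le> t (j + 1)"
  shows "infnorm (mixed_diff (coons s t N) x1 x2 y1 y2) \<le> 3 * L * \<bar>x1 - x2\<bar> * \<bar>y1 - y2\<bar>"
proof -
  define h1 h2 where "h1 = s (i + 1) - s i" and "h2 = t (j + 1) - t j"
  have "h1 > 0" "h2 > 0"
    using grid_lines_less[OF gs, of i "i + 1"] grid_lines_less[OF gt, of j "j + 1"]
    by (auto simp: h1_def h2_def)
  define c d where "c = (x2 - x1) / h1" and "d = (y2 - y1) / h2"
  define D1 D2 D3 where "D1 = mixed_diff N (s i) (s (i + 1)) y1 y2"
    and "D2 = mixed_diff N x1 x2 (t j) (t (j + 1))"
    and "D3 = mixed_diff N (s i) (s (i + 1)) (t j) (t (j + 1))"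
  have vertical: "infnorm (mixed_diff N (s k) (s l) u v) \<le> L * \<bar>s k - s l\<bar> * \<bar>u - v\<bar>"
    for k l u v by (rule BMSDD_imp_infnorm_mixed_diff_le[OF N]) (auto simp: grid_def)
  have horizontal: "infnorm (mixed_diff N u v (t k) (t l)) \<le> L * \<bar>u - v\<bar> * \<bar>t k - t l\<bar>"
    for k l u v by (rule BMSDD_imp_infnorm_mixed_diff_le[OF N]) (auto simp: grid_def)
  have D1: "infnorm D1 \<le> L * h1 * \<bar>y1 - y2\<bar>"
    using vertical[of i "i + 1" y1 y2] \<open>h1 > 0\<close> by (simp add: D1_def h1_def abs_minus_commute)
  have D2: "infnorm D2 \<le> L * \<bar>x1 - x2\<bar> * h2"
    using horizontal[of x1 x2 j "j + 1"] \<open>h2 > 0\<close> by (simp add: D2_def h2_def abs_minus_commute)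
  have D3: "infnorm D3 \<le> L * h1 * h2"
    using vertical[of i "i + 1" "t j" "t (j + 1)"] \<open>h1 > 0\<close> \<open>h2 > 0\<close>
    by (simp add: D3_def h1_def h2_def abs_minus_commute)
  have patch: "coons s t N u v = coons_patch s t N i j u v" if "u \<in> {x1, x2}" "v \<in> {y1, y2}" for u v
    using that x y by (auto intro: coons_eq_coons_patch[OF gs gt])
  have "mixed_diff (coons s t N) x1 x2 y1 y2 = mixed_diff (coons_patch s t N i j) x1 x2 y1 y2"
    by (simp add: mixed_diff_def patch)
  also have "\<dots> = c *\<^sub>R D1 + d *\<^sub>R D2 - (c * d) *\<^sub>R D3"
    using \<open>h1 > 0\<close> \<open>h2 > 0\<close> unfolding c_def d_def D1_def D2_def D3_def h1_def h2_def
    by (intro mixed_diff_coons_patch) auto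
  finally have "infnorm (mixed_diff (coons s t N) x1 x2 y1 y2)
      \<le> \<bar>c\<bar> * infnorm D1 + \<bar>d\<bar> * infnorm D2 + \<bar>c\<bar> * \<bar>d\<bar> * infnorm D3"
    using infnorm_triangle[of "c *\<^sub>R D1 + d *\<^sub>R D2" "- ((c * d) *\<^sub>R D3)"]
      infnorm_triangle[of "c *\<^sub>R D1" "d *\<^sub>R D2"]
    by (simp add: infnorm_mul infnorm_neg abs_mult)
  also have "\<dots> \<le> \<bar>c\<bar> * (L * h1 * \<bar>y1 - y2\<bar>) + \<bar>d\<bar> * (L * \<bar>x1 - x2\<bar> * h2)
      + \<bar>c\<bar> * \<bar>d\<bar> * (L * h1 * h2)"
    by (intro add_mono mult_left_mono D1 D2 D3) auto
  also have "\<dots> = 3 * L * \<bar>x1 - x2\<bar> * \<bar>y1 - y2\<bar>"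
    using \<open>h1 > 0\<close> \<open>h2 > 0\<close>
    by (simp add: c_def d_def abs_divide abs_minus_commute[of x2] abs_minus_commute[of y2])
  finally show ?thesis .
qed

lemma cellwise_Lipschitz_upto:
  fixes g :: "real \<Rightarrow> 'a::euclidean_space"
  assumes cellwise: "\<And>i a b. s i \<le> a \<Longrightarrow> a \<le> b \<Longrightarrow> b \<le> s (i + 1) \<Longrightarrow>
      infnorm (g b - g a) \<le> K * (b - a)"
  shows "s i \<le> a \<Longrightarrow> a \<le> b \<Longrightarrow> b \<le> s (i + int n) \<Longrightarrow> infnorm (g b - g a) \<le> K * (b - a)"
proof (induction n arbitrary: b)
  case 0
  then have "b = a" by force
  then show ?case by (simp add: infnorm_0)
next
  case (Suc n)
  show ?case
  proof (cases "b \<le> s (i + int n)")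
    case True
    then show ?thesis using Suc by blast
  next
    case False
    define m where "m = max a (s (i + int n))"
    have left: "infnorm (g m - g a) \<le> K * (m - a)"
      using Suc.IH[of m] Suc.prems(1) by (auto simp: m_def max_def infnorm_0)
    have "b \<le> s (i + int n + 1)"
      using Suc.prems(3) by (simp add: ac_simps)
    then have right: "infnorm (g b - g m) \<le> K * (b - m)"
      using cellwise[of "i + int n" m b] Suc.prems(2) False by (simp add: m_def)
    have "infnorm (g b - g a) \<le> infnorm (g m - g a) + infnorm (g b - g m)"
      using infnorm_triangle[of "g m - g a" "g b - g m"] by simp
    with left right show ?thesis by argo
  qed
qed

lemma cellwise_Lipschitz:
  fixes g :: "real \<Rightarrow> 'a::euclidean_space"
  assumes "grid_lines s"
    and "\<And>i a b. s i \<le> a \<Longrightarrow> a \<le> b \<Longrightarrow> b \<le> s (i + 1) \<Longrightarrow>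
      infnorm (g b - g a) \<le> K * (b - a)"
  shows "infnorm (g b - g a) \<le> K * \<bar>b - a\<bar>"
proof -
  have ordered: "infnorm (g v - g u) \<le> K * (v - u)" if "u \<le> v" for u v
  proof -
    obtain i k where "s i < u" "v < s k"
      using \<open>grid_lines s\<close> unfolding grid_lines_def by blast
    moreover from this have "i < k"
      using that grid_lines_le[OF \<open>grid_lines s\<close>, of k i] by force
    ultimately show ?thesis
      using cellwise_Lipschitz_upto[OF assms(2), where i = i and a = u and b = v and n = "nat (k - i)"]
        that by simp
  qed
  show ?thesis
    using ordered[of a b] ordered[of b a] by (cases "a \<le> b") (auto simp: infnorm_sub)
qed

lemma infnorm_mixed_diff_le_if_cellwise:
  fixes F :: "real \<Rightarrow> real \<Rightarrow> 'a::euclidean_space"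
  assumes gs: "grid_lines s" and gt: "grid_lines t"
    and cellwise: "\<And>i j x1 x2 y1 y2. s i \<le> x1 \<Longrightarrow> x1 \<le> x2 \<Longrightarrow> x2 \<le> s (i + 1) \<Longrightarrow>
      t j \<le> y1 \<Longrightarrow> y1 \<le> y2 \<Longrightarrow> y2 \<le> t (j + 1) \<Longrightarrow>
      infnorm (mixed_diff F x1 x2 y1 y2) \<le> K * \<bar>x1 - x2\<bar> * \<bar>y1 - y2\<bar>"
  shows "infnorm (mixed_diff F x1 x2 y1 y2) \<le> K * \<bar>x1 - x2\<bar> * \<bar>y1 - y2\<bar>"
proof -
  have strip: "infnorm (mixed_diff F x1 x2 u v) \<le> K * \<bar>x1 - x2\<bar> * \<bar>u - v\<bar>"
    if "t j \<le> u" "u \<le> v" "v \<le> t (j + 1)" for x1 x2 u v j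
    using cellwise_Lipschitz[OF gs, of "\<lambda>x. F x v - F x u" "K * \<bar>u - v\<bar>" x2 x1]
      cellwise[OF _ _ _ that]
    by (simp add: mixed_diff_def algebra_simps abs_minus_commute)
  show ?thesis
    using cellwise_Lipschitz[OF gt, of "\<lambda>y. F x2 y - F x1 y" "K * \<bar>x1 - x2\<bar>" y2 y1] strip
    by (simp add: mixed_diff_def algebra_simps abs_minus_commute)
qed

lemma infnorm_mixed_diff_coons_le:
  assumes "grid_lines s" and "grid_lines t" and "BMSDD (grid s t) N L"
  shows "infnorm (mixed_diff (coons s t N) x1 x2 y1 y2) \<le> 3 * L * \<bar>x1 - x2\<bar> * \<bar>y1 - y2\<bar>"
proof (rule infnorm_mixed_diff_le_if_cellwise[OF assms(1,2)])
  fix i j and u1 u2 v1 v2 :: real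
  assume "s i \<le> u1" "u1 \<le> u2" "u2 \<le> s (i + 1)" "t j \<le> v1" "v1 \<le> v2" "v2 \<le> t (j + 1)"
  then show "infnorm (mixed_diff (coons s t N) u1 u2 v1 v2) \<le> 3 * L * \<bar>u1 - u2\<bar> * \<bar>v1 - v2\<bar>"
    by (intro infnorm_mixed_diff_coons_cell[OF assms]) auto
qed

theorem corollary2:
  fixes s t :: "int \<Rightarrow> real" and N :: "real \<Rightarrow> real \<Rightarrow> real^'m" and L :: real
    and \<alpha>s \<beta>s \<alpha>t \<beta>t :: "int \<Rightarrow> real"
  assumes "grid_lines s" and "grid_lines t"
    and "C0_net s t N"
    and "BMSDD (grid s t) N L"
    and "W_class \<alpha>s \<beta>s" and "W_class \<alpha>t \<beta>t"
  shows "BMSDD (grid (refine \<alpha>s \<beta>s s) (refine \<alpha>t \<beta>t t)) (coons s t N) (3 * L)"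
  using infnorm_mixed_diff_coons_le[OF assms(1,2,4)]
  by (intro BMSDD_if_infnorm_mixed_diff_le) (simp add: mult.assoc)

end
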